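(* Let $1\le k\le n$, $\sigma\in\mathcal D^\Delta_k$, $\tilde\sigma=\overline\psi_{n,k}(\sigma)=\tilde\sigma_1\cdots\tilde\sigma_k$, and let $\gamma$ be the increasing word $(s(\sigma)+1)(s(\sigma)+2)\cdots(n-e(\sigma))$. Then $\overline\psi_{n,n}$ restricts to a bijection from $\Delta^<_n(\sigma)=\{\pi\in B_n: dp(\pi)=\sigma,\ 0<\pi_n<n\}$ onto the set of shuffles $\alpha$ of $\tilde\sigma$ and $\gamma$ whose last letter is $\tilde\sigma_k$, and $\mathrm{fmaj}(\pi)=\mathrm{fmaj}(\overline\psi_{n,n}(\pi))$ for every $\pi\in\Delta^<_n(\sigma)$.
   Context: $B_n$ is the set of words $\pi=\pi_1\cdots\pi_n$ with $\pi_i\in\{\pm1,\dots,\pm n\}$ and $|\pi_1|\cdots|\pi_n|$ a permutation of $[n]$; $\mathcal D^\Delta_k$ is the set of $\sigma\in B_k$ with $\sigma_k>0$ and $\sigma_i\ne i$ for all $i$. For a word of nonzero integers with distinct absolute values $a_1<\dots<a_m$, its reduction replaces each letter $\pm a_j$ by $\pm j$; $dp(\pi)$ is the reduction of the subword of letters $\pi_i$ with $\pi_i\ne i$. For $\sigma\in B_k$, the letter $\sigma_j$ is a subcedant if $\sigma_j<j$, an excedant if $\sigma_j>j$, a fixed point if $\sigma_j=j$; $s(\sigma)$, $e(\sigma)$ are the numbers of subcedants and excedants. For $k\le n$, $\overline\psi_{n,k}(\sigma)$ is obtained from $\sigma$ by replacing the $i$-th smallest in absolute value subcedant $\sigma_j$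 by $\mathrm{sgn}(\sigma_j)\,i$ ($1\le i\le s(\sigma)$), the $i$-th smallest fixed point by $s(\sigma)+i$, and the $i$-th largest excedant by $n-i+1$ ($1\le i\le e(\sigma)$). A shuffle of two words with disjoint sets of letters is a word containing both as subsequences and consisting of exactly their letters. Order $\prec$: $-1\prec-2\prec\cdots\prec-N\prec1\prec\cdots\prec N$; $\mathrm{maj}_\prec(w)=\sum_{i:w_i\succ w_{i+1}}i$; $\mathrm{fmaj}(w)=2\mathrm{maj}_\prec(w)+\mathrm{neg}(w)$ with $\mathrm{neg}(w)$ the number of negative letters. *)

theory Defs
  imports Main
begin

text \<open>Words are int lists; positions are 1-based in the paper, so the letter
  pi_i is w ! (i - 1).\<close>

definition signed_perm :: "nat \<Rightarrow> int list \<Rightarrow> bool" where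
  "signed_perm n w \<longleftrightarrow> length w = n \<and> 0 \<notin> set w \<and>
     distinct (map abs w) \<and> set (map abs w) = {1..int n}"

definition B :: "nat \<Rightarrow> int list set" where
  "B n = {w. signed_perm n w}"

definition derangD :: "nat \<Rightarrow> int list set" where
  "derangD k = {w \<in> B k. last w > 0 \<and> (\<forall>i<k. w ! i \<noteq> int (i + 1))}"

definition red :: "int list \<Rightarrow> int list" where
  "red w = map (\<lambda>x. sgn x * int (card {y \<in> set (map abs w). y \<le> \<bar>x\<bar>})) w"

definition nonfixed_subword :: "int list \<Rightarrow> int list" where
  "nonfixed_subword w = map fst (filter (\<lambda>(x, i). x \<noteq> int i) (zip w [1..<length w + 1]))"

definition dp :: "int list \<Rightarrow> int list" where
  "dp w = red (nonfixed_subword w)"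

definition subc_pos :: "int list \<Rightarrow> nat set" where
  "subc_pos w = {j. j < length w \<and> w ! j < int (j + 1)}"
definition exc_pos :: "int list \<Rightarrow> nat set" where
  "exc_pos w = {j. j < length w \<and> w ! j > int (j + 1)}"
definition fix_pos :: "int list \<Rightarrow> nat set" where
  "fix_pos w = {j. j < length w \<and> w ! j = int (j + 1)}"

definition s_num :: "int list \<Rightarrow> nat" where "s_num w = card (subc_pos w)"
definition e_num :: "int list \<Rightarrow> nat" where "e_num w = card (exc_pos w)"

definition psi :: "nat \<Rightarrow> int list \<Rightarrow> int list" where
  "psi n w = map (\<lambda>j.
      if j \<in> subc_pos w then
        sgn (w ! j) * int (card {j' \<in> subc_pos w. \<bar>w ! j'\<bar> \<le> \<bar>w ! j\<bar>})
      else if j \<in> fix_pos w then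
        int (s_num w + card {j' \<in> fix_pos w. w ! j' \<le> w ! j})
      else
        int n - int (card {j' \<in> exc_pos w. w ! j' \<ge> w ! j}) + 1)
    [0..<length w]"

text \<open>The order -1 < -2 < ... < -N < 1 < ... < N.\<close>
definition prec :: "int \<Rightarrow> int \<Rightarrow> bool" where
  "prec x y \<longleftrightarrow> (if x < 0 \<and> y < 0 then \<bar>x\<bar> < \<bar>y\<bar>
                  else if x < 0 then 0 < y
                  else if y < 0 then False else x < y)"

definition maj_prec :: "int list \<Rightarrow> nat" where
  "maj_prec w = (\<Sum>i \<in> {i. 1 \<le> i \<and> i < length w \<and> prec (w ! i) (w ! (i - 1))}. i)"

definition neg :: "int list \<Rightarrow> nat" where
  "neg w = length (filter (\<lambda>x. x < 0) w)"

definition fmaj :: "int list \<Rightarrow> nat" where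
  "fmaj w = 2 * maj_prec w + neg w"

definition Delta_lt :: "nat \<Rightarrow> int list \<Rightarrow> int list set" where
  "Delta_lt n \<sigma> = {\<pi> \<in> B n. dp \<pi> = \<sigma> \<and> 0 < last \<pi> \<and> last \<pi> < int n}"

definition gamma_word :: "nat \<Rightarrow> int list \<Rightarrow> int list" where
  "gamma_word n \<sigma> = [int (s_num \<sigma>) + 1 .. int n - int (e_num \<sigma>)]"

end

theory Submission
  imports Defs
begin

text \<open>
  psi n keeps every letter in its class and replaces it by its rank inside the class, sending
  subcedants, fixed points and excedants to the blocks \<open>\<plusminus>[1, s]\<close>, \<open>[s + 1, s + f]\<close> and
  \<open>[n - e + 1, n]\<close>. For adjacent positions a comparison across classes has the same outcome before
  and after (a subcedant right after the fixed point \<open>a + 1\<close> is below it, and so on), so descents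
  for \<open>\<prec>\<close> and negative letters are preserved and fmaj is invariant.

  If \<open>dp \<pi> = \<sigma>\<close>, reduction of the moved letters of \<open>\<pi>\<close> is monotone and sends the position of the
  j-th moved letter to j, so classes and relative orders agree: psi n \<open>\<pi>\<close> shows psi n \<open>\<sigma>\<close> at the
  moved positions and \<open>\<gamma>\<close> at the fixed ones, and ends like psi n \<open>\<sigma>\<close> because \<open>0 < \<pi>\<^sub>n < n\<close>
  makes position n moved. Conversely a shuffle \<open>\<alpha>\<close> determines the positions \<open>p\<^sub>1 < \<dots> < p\<^sub>k\<close> of the
  letters of psi n \<open>\<sigma>\<close>, and \<open>\<pi>\<close> is recovered by putting \<open>sgn \<sigma>\<^sub>j \<cdot> p\<^bsub>|\<sigma>\<^sub>j|\<^esub>\<close> at \<open>p\<^sub>j\<close> and fixing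
  every other position.
\<close>

lemma card_rank_less_iff:
  fixes f :: "'a \<Rightarrow> 'b::linorder"
  assumes "finite S" "b \<in> S"
  shows "card {x\<in>S. f x \<le> f a} < card {x\<in>S. f x \<le> f b} \<longleftrightarrow> f a < f b"
proof
  assume "f a < f b"
  then have "b \<in> {x\<in>S. f x \<le> f b} - {x\<in>S. f x \<le> f a}"
    "{x\<in>S. f x \<le> f a} \<subseteq> {x\<in>S. f x \<le> f b}"
    using assms(2) by auto
  then have "{x\<in>S. f x \<le> f a} \<subset> {x\<in>S. f x \<le> f b}" by blast
  then show "card {x\<in>S. f x \<le> f a} < card {x\<in>S. f x \<le> f b}"
    using assms(1) by (intro psubset_card_mono) auto
next
  assume "card {x\<in>S. f x \<le> f a} < card {x\<in>S. f x \<le> f b}"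
  moreover have "\<not> f a < f b \<Longrightarrow> card {x\<in>S. f x \<le> f b} \<le> card {x\<in>S. f x \<le> f a}"
    using assms(1) by (intro card_mono) auto
  ultimately show "f a < f b" by linarith
qed

lemma card_rank_bounds:
  fixes f :: "'a \<Rightarrow> 'b::linorder"
  assumes "finite S" "a \<in> S"
  shows "1 \<le> card {x\<in>S. f x \<le> f a}" "card {x\<in>S. f x \<le> f a} \<le> card S"
  using assms by (auto simp: Suc_le_eq card_gt_0_iff intro: card_mono)

lemma sorted_wrt_less_nth_less_iff:
  "sorted_wrt (<) (xs::nat list) \<Longrightarrow> a < length xs \<Longrightarrow> b < length xs \<Longrightarrow> xs!a < xs!b \<longleftrightarrow> a < b"
  by (metis not_less_iff_gr_or_eq order.asym sorted_wrt_nth_less)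

lemma sorted_wrt_less_card_less_nth:
  assumes sorted: "sorted_wrt (<) (xs::nat list)" and j: "j < length xs"
  shows "card {x\<in>set xs. x < xs!j} = j"
proof -
  have "{x\<in>set xs. x < xs!j} = nth xs ` {..<j}"
    using sorted_wrt_less_nth_less_iff[OF sorted _ j] j
    by (auto simp: in_set_conv_nth image_iff intro: less_trans)
  moreover have "inj_on (nth xs) {..<j}"
    using sorted j by (intro inj_on_nth) (auto simp: strict_sorted_iff)
  ultimately show ?thesis by (simp add: card_image)
qed

lemma sorted_wrt_less_card_le_nth:
  assumes "sorted_wrt (<) (xs::nat list)" "j < length xs"
  shows "card {x\<in>set xs. x \<le> xs!j} = Suc j"
proof -
  have "{x\<in>set xs. x \<le> xs!j} = insert (xs!j) {x\<in>set xs. x < xs!j}" using assms(2) by auto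
  then show ?thesis using sorted_wrt_less_card_less_nth[OF assms] by simp
qed

lemma sorted_wrt_less_filter_upt: "sorted_wrt (<) (filter P [0..<n])"
  by (rule sorted_wrt_filter) simp

lemma card_filter_upt_nth:
  assumes "j < length (filter P [0..<n])"
  shows "card {i'. i' < filter P [0..<n] ! j \<and> P i'} = j"
proof -
  let ?L = "filter P [0..<n]"
  have "?L ! j \<in> set ?L" using assms by (rule nth_mem)
  then have "{i'. i' < ?L ! j \<and> P i'} = {x\<in>set ?L. x < ?L!j}" by auto
  then show ?thesis using sorted_wrt_less_card_less_nth[OF sorted_wrt_less_filter_upt assms] by simp
qed

lemma list_eq_by_filter_partition:
  "length xs = length ys \<Longrightarrow> (\<forall>i<length xs. P (xs!i) \<longleftrightarrow> P (ys!i)) \<Longrightarrow>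
   filter P xs = filter P ys \<Longrightarrow> filter (\<lambda>x. \<not> P x) xs = filter (\<lambda>x. \<not> P x) ys \<Longrightarrow> xs = ys"
proof (induction xs arbitrary: ys)
  case (Cons x xs)
  then obtain y ys' where y: "ys = y # ys'" by (cases ys) auto
  have "P x \<longleftrightarrow> P y" "\<forall>i<length xs. P (xs!i) \<longleftrightarrow> P (ys'!i)"
    using Cons.prems(2) y by force+
  then show ?case using Cons.prems Cons.IH[of ys'] y by (cases "P x") auto
qed simp

lemma signed_perm_length: "signed_perm n w \<Longrightarrow> length w = n"
  by (simp add: signed_perm_def)

lemma signed_perm_nth_nonzero: "signed_perm n w \<Longrightarrow> j < length w \<Longrightarrow> w ! j \<noteq> 0"
  unfolding signed_perm_def using nth_mem[of j w] by force

lemma signed_perm_abs_bounds: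
  "signed_perm n w \<Longrightarrow> j < length w \<Longrightarrow> 1 \<le> \<bar>w ! j\<bar> \<and> \<bar>w ! j\<bar> \<le> int n"
  unfolding signed_perm_def by (metis atLeastAtMost_iff length_map nth_map nth_mem)

lemma signed_perm_abs_inj:
  "signed_perm n w \<Longrightarrow> a < length w \<Longrightarrow> b < length w \<Longrightarrow> \<bar>w!a\<bar> = \<bar>w!b\<bar> \<Longrightarrow> a = b"
  unfolding signed_perm_def using nth_eq_iff_index_eq[of "map abs w" a b] by simp

lemma signed_perm_abs_surj:
  "signed_perm n w \<Longrightarrow> 1 \<le> v \<Longrightarrow> v \<le> int n \<Longrightarrow> \<exists>j<length w. \<bar>w!j\<bar> = v"
  unfolding signed_perm_def by (metis atLeastAtMost_iff in_set_conv_nth length_map nth_map)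

lemma pos_classes_cases:
  assumes "j < length w"
  obtains "j \<in> subc_pos w" | "j \<in> fix_pos w" | "j \<in> exc_pos w"
  using assms linorder_neqE[of "w!j" "int (j+1)"]
  unfolding subc_pos_def fix_pos_def exc_pos_def by blast

lemma pos_classes_less_length:
  "j \<in> subc_pos w \<Longrightarrow> j < length w" "j \<in> fix_pos w \<Longrightarrow> j < length w"
  "j \<in> exc_pos w \<Longrightarrow> j < length w"
  by (auto simp: subc_pos_def fix_pos_def exc_pos_def)

lemma finite_pos_classes[simp]: "finite (subc_pos w)" "finite (fix_pos w)" "finite (exc_pos w)"
  unfolding subc_pos_def fix_pos_def exc_pos_def by auto

lemma card_pos_classes: "s_num w + card (fix_pos w) + e_num w = length w"
proof -
  have "subc_pos w \<union> fix_pos w \<union> exc_pos w = {..<length w}"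
    unfolding subc_pos_def fix_pos_def exc_pos_def by auto
  moreover have "subc_pos w \<inter> fix_pos w = {}" "(subc_pos w \<union> fix_pos w) \<inter> exc_pos w = {}"
    unfolding subc_pos_def fix_pos_def exc_pos_def by auto
  ultimately show ?thesis
    unfolding s_num_def e_num_def by (metis card_Un_disjoint card_lessThan finite_Un finite_pos_classes)
qed

subsection \<open>The map psi and the flag major index\<close>

definition subc_rank :: "int list \<Rightarrow> nat \<Rightarrow> nat" where
  "subc_rank w j = card {j' \<in> subc_pos w. \<bar>w ! j'\<bar> \<le> \<bar>w ! j\<bar>}"
definition fix_rank :: "int list \<Rightarrow> nat \<Rightarrow> nat" where
  "fix_rank w j = card {j' \<in> fix_pos w. w ! j' \<le> w ! j}"
definition exc_rank :: "int list \<Rightarrow> nat \<Rightarrow> nat" where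
  "exc_rank w j = card {j' \<in> exc_pos w. w ! j' \<ge> w ! j}"

lemma length_psi[simp]: "length (psi n w) = length w"
  by (simp add: psi_def)

lemma psi_nth_subc: "j \<in> subc_pos w \<Longrightarrow> psi n w ! j = sgn (w!j) * int (subc_rank w j)"
  by (auto simp: psi_def subc_pos_def subc_rank_def)

lemma psi_nth_fix: "j \<in> fix_pos w \<Longrightarrow> psi n w ! j = int (s_num w + fix_rank w j)"
  by (auto simp: psi_def subc_pos_def fix_pos_def fix_rank_def)

lemma psi_nth_exc: "j \<in> exc_pos w \<Longrightarrow> psi n w ! j = int n - int (exc_rank w j) + 1"
  by (auto simp: psi_def subc_pos_def fix_pos_def exc_pos_def exc_rank_def)

lemma subc_rank_bounds: "j \<in> subc_pos w \<Longrightarrow> 1 \<le> subc_rank w j \<and> subc_rank w j \<le> s_num w"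
  unfolding subc_rank_def s_num_def using card_rank_bounds[of "subc_pos w" j "\<lambda>j. \<bar>w!j\<bar>"] by simp

lemma fix_rank_bounds: "j \<in> fix_pos w \<Longrightarrow> 1 \<le> fix_rank w j \<and> fix_rank w j \<le> card (fix_pos w)"
  unfolding fix_rank_def using card_rank_bounds[of "fix_pos w" j "\<lambda>j. w!j"] by simp

lemma exc_rank_bounds: "j \<in> exc_pos w \<Longrightarrow> 1 \<le> exc_rank w j \<and> exc_rank w j \<le> e_num w"
  unfolding exc_rank_def e_num_def using card_rank_bounds[of "exc_pos w" j "\<lambda>j. - w!j"] by simp

lemma subc_rank_less_iff:
  "b \<in> subc_pos w \<Longrightarrow> subc_rank w a < subc_rank w b \<longleftrightarrow> \<bar>w!a\<bar> < \<bar>w!b\<bar>"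
  unfolding subc_rank_def by (rule card_rank_less_iff) auto

lemma exc_rank_less_iff:
  "b \<in> exc_pos w \<Longrightarrow> exc_rank w a < exc_rank w b \<longleftrightarrow> w!b < w!a"
  unfolding exc_rank_def using card_rank_less_iff[of "exc_pos w" b "\<lambda>j. - w!j" a] by simp

lemma fix_rank_mono: "w!a \<le> w!b \<Longrightarrow> fix_rank w a \<le> fix_rank w b"
  unfolding fix_rank_def by (intro card_mono) auto

lemma psi_nth_subc_sign:
  assumes "signed_perm m w" "j \<in> subc_pos w"
  shows "(w!j < 0 \<and> psi n w ! j = - int (subc_rank w j)) \<or> (w!j > 0 \<and> psi n w ! j = int (subc_rank w j))"
  using signed_perm_nth_nonzero[OF assms(1) pos_classes_less_length(1)[OF assms(2)]]
    psi_nth_subc[OF assms(2), of n] by (auto simp: sgn_if)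

lemma prec_iff:
  "prec x y \<longleftrightarrow> (x < 0 \<and> y < 0 \<and> y < x) \<or> (x < 0 \<and> 0 < y) \<or> (0 \<le> x \<and> 0 \<le> y \<and> x < y)"
  unfolding prec_def by auto

context
  fixes n a :: nat and w :: "int list"
  assumes sp: "signed_perm n w" and adjacent: "Suc a < n"
begin

lemma Suc_less_length: "Suc a < length w"
  using adjacent signed_perm_length[OF sp] by simp

lemma card_pos_classes_n: "s_num w + card (fix_pos w) + e_num w = n"
  using card_pos_classes[of w] signed_perm_length[OF sp] by simp

lemma abs_adjacent_ne: "\<bar>w!a\<bar> \<noteq> \<bar>w!Suc a\<bar>"
  using signed_perm_abs_inj[OF sp _ Suc_less_length, of a] Suc_less_length by auto

lemma prec_psi_after_subc:
  assumes A: "a \<in> subc_pos w"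
  shows "prec (psi n w ! Suc a) (psi n w ! a) \<longleftrightarrow> prec (w ! Suc a) (w ! a)"
proof -
  note first = psi_nth_subc_sign[OF sp A, of n] subc_rank_bounds[OF A]
  show ?thesis
  proof (cases rule: pos_classes_cases[OF Suc_less_length])
    case 1
    then show ?thesis using first psi_nth_subc_sign[OF sp 1, of n] subc_rank_bounds[OF 1] abs_adjacent_ne
        subc_rank_less_iff[OF 1, of a] subc_rank_less_iff[OF A, of "Suc a"]
      by (elim disjE conjE) (simp_all add: prec_iff)
  next
    case 2
    then show ?thesis using first psi_nth_fix[OF 2, of n] fix_rank_bounds[OF 2] A
      by (elim disjE conjE) (simp_all add: prec_iff subc_pos_def fix_pos_def)
  next
    case 3
    then show ?thesis using first psi_nth_exc[OF 3, of n] exc_rank_bounds[OF 3] card_pos_classes_n A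
      by (elim disjE conjE) (simp_all add: prec_iff subc_pos_def exc_pos_def)
  qed
qed

lemma prec_psi_after_fix:
  assumes A: "a \<in> fix_pos w"
  shows "prec (psi n w ! Suc a) (psi n w ! a) \<longleftrightarrow> prec (w ! Suc a) (w ! a)"
proof -
  note first = psi_nth_fix[OF A, of n] fix_rank_bounds[OF A]
  show ?thesis
  proof (cases rule: pos_classes_cases[OF Suc_less_length])
    case 1
    then show ?thesis using first psi_nth_subc_sign[OF sp 1, of n] subc_rank_bounds[OF 1] abs_adjacent_ne A
      by (elim disjE conjE) (simp_all add: prec_iff subc_pos_def fix_pos_def)
  next
    case 2
    then show ?thesis using first psi_nth_fix[OF 2, of n] fix_rank_mono[of w a "Suc a"] A
      by (simp add: prec_iff fix_pos_def)
  next
    case 3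
    then show ?thesis using first psi_nth_exc[OF 3, of n] exc_rank_bounds[OF 3] card_pos_classes_n A
      by (simp add: prec_iff exc_pos_def fix_pos_def)
  qed
qed

lemma prec_psi_after_exc:
  assumes A: "a \<in> exc_pos w"
  shows "prec (psi n w ! Suc a) (psi n w ! a) \<longleftrightarrow> prec (w ! Suc a) (w ! a)"
proof -
  note first = psi_nth_exc[OF A, of n] exc_rank_bounds[OF A]
  show ?thesis
  proof (cases rule: pos_classes_cases[OF Suc_less_length])
    case 1
    then show ?thesis using first psi_nth_subc_sign[OF sp 1, of n] subc_rank_bounds[OF 1] card_pos_classes_n A
      by (elim disjE conjE) (simp_all add: prec_iff subc_pos_def exc_pos_def)
  next
    case 2
    then show ?thesis using first psi_nth_fix[OF 2, of n] fix_rank_bounds[OF 2] card_pos_classes_n abs_adjacent_ne A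
      by (simp add: prec_iff exc_pos_def fix_pos_def)
  next
    case 3
    then show ?thesis using first psi_nth_exc[OF 3, of n] exc_rank_bounds[OF 3] card_pos_classes_n A
        exc_rank_less_iff[OF 3, of a] exc_rank_less_iff[OF A, of "Suc a"]
      by (simp add: prec_iff exc_pos_def) linarith
  qed
qed

lemma prec_psi_adjacent_iff:
  "prec (psi n w ! Suc a) (psi n w ! a) \<longleftrightarrow> prec (w ! Suc a) (w ! a)"
proof -
  have "a < length w" using Suc_less_length by simp
  then show ?thesis
    by (cases rule: pos_classes_cases) (simp_all add: prec_psi_after_subc prec_psi_after_fix prec_psi_after_exc)
qed

end

lemma psi_nth_neg_iff:
  assumes sp: "signed_perm m w" and j: "j < length w" and "e_num w \<le> n"
  shows "psi n w ! j < 0 \<longleftrightarrow> w ! j < 0"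
proof (cases rule: pos_classes_cases[OF j])
  case 1
  then show ?thesis using psi_nth_subc_sign[OF sp 1, of n] subc_rank_bounds[OF 1] by auto
next
  case 2
  then show ?thesis using psi_nth_fix[OF 2, of n] by (auto simp: fix_pos_def)
next
  case 3
  then show ?thesis using psi_nth_exc[OF 3, of n] exc_rank_bounds[OF 3] assms(3)
    by (auto simp: exc_pos_def)
qed

lemma fmaj_psi:
  assumes sp: "signed_perm n w"
  shows "fmaj (psi n w) = fmaj w"
proof -
  have len: "length w = n" using signed_perm_length[OF sp] .
  have "e_num w \<le> n" using card_pos_classes[of w] len by simp
  then have "neg (psi n w) = neg w"
    unfolding neg_def length_filter_conv_card length_psi
    using psi_nth_neg_iff[OF sp] by (metis (lifting))
  moreover have "prec (psi n w ! i) (psi n w ! (i - 1)) \<longleftrightarrow> prec (w ! i) (w ! (i - 1))"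
    if "1 \<le> i" "i < n" for i
    using prec_psi_adjacent_iff[OF sp, of "i - 1"] that by simp
  then have "maj_prec (psi n w) = maj_prec w"
    unfolding maj_prec_def length_psi len by (metis (lifting))
  ultimately show ?thesis unfolding fmaj_def by simp
qed

subsection \<open>Moved letters and the word \<open>\<gamma>\<close>\<close>

definition off_gamma :: "nat \<Rightarrow> int list \<Rightarrow> int \<Rightarrow> bool" where
  "off_gamma n \<sigma> x \<longleftrightarrow> x \<notin> set (gamma_word n \<sigma>)"

lemma off_gamma_iff:
  "off_gamma n \<sigma> x \<longleftrightarrow> \<not> (int (s_num \<sigma>) + 1 \<le> x \<and> x \<le> int n - int (e_num \<sigma>))"
  by (simp add: off_gamma_def gamma_word_def)

lemma length_gamma_word:
  "s_num \<sigma> + e_num \<sigma> \<le> n \<Longrightarrow> length (gamma_word n \<sigma>) = n - (s_num \<sigma> + e_num \<sigma>)"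
  unfolding gamma_word_def by simp

lemma nth_gamma_word:
  "m < n - (s_num \<sigma> + e_num \<sigma>) \<Longrightarrow> gamma_word n \<sigma> ! m = int (s_num \<sigma> + Suc m)"
  unfolding gamma_word_def by (subst nth_upto) auto

lemma nonfixed_subword_conv:
  "nonfixed_subword w = map (nth w) (filter (\<lambda>i. w!i \<noteq> int (i+1)) [0..<length w])"
proof -
  have "zip w [1..<length w + 1] = map (\<lambda>i. (w!i, i+1)) [0..<length w]"
    by (rule nth_equalityI) (auto simp del: upt_Suc)
  then show ?thesis by (simp add: nonfixed_subword_def filter_map o_def)
qed

lemma length_red[simp]: "length (red v) = length v"
  by (simp add: red_def)

lemma nth_red:
  "j < length v \<Longrightarrow> red v ! j = sgn (v!j) * int (card {y \<in> abs ` set v. y \<le> \<bar>v!j\<bar>})"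
  by (simp add: red_def)

locale deranged_pattern =
  fixes n k :: nat and \<sigma> :: "int list"
  assumes derangement: "\<sigma> \<in> derangD k" and k_pos: "1 \<le> k" and k_le_n: "k \<le> n"
begin

lemma signed_perm_sigma: "signed_perm k \<sigma>"
  using derangement by (simp add: derangD_def B_def)

lemma length_sigma: "length \<sigma> = k"
  using signed_perm_sigma by (rule signed_perm_length)

lemma fix_pos_sigma: "fix_pos \<sigma> = {}"
  using derangement length_sigma by (auto simp: derangD_def fix_pos_def)

lemma pos_classes_sigma_less: "j \<in> subc_pos \<sigma> \<Longrightarrow> j < k" "j \<in> exc_pos \<sigma> \<Longrightarrow> j < k"
  using length_sigma by (auto simp: subc_pos_def exc_pos_def)

lemma s_num_plus_e_num_sigma: "s_num \<sigma> + e_num \<sigma> = k"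
  using card_pos_classes[of \<sigma>] fix_pos_sigma length_sigma by simp

lemma length_gamma_word_sigma: "length (gamma_word n \<sigma>) = n - k"
  using length_gamma_word[of \<sigma> n] s_num_plus_e_num_sigma k_le_n by simp

lemma off_gamma_psi_sigma: "x \<in> set (psi n \<sigma>) \<Longrightarrow> off_gamma n \<sigma> x"
proof -
  assume "x \<in> set (psi n \<sigma>)"
  then obtain j where j: "j < length \<sigma>" "x = psi n \<sigma> ! j" by (auto simp: in_set_conv_nth)
  show ?thesis
  proof (cases rule: pos_classes_cases[OF j(1)])
    case 1
    then show ?thesis
      using psi_nth_subc_sign[OF signed_perm_sigma 1, of n] subc_rank_bounds[OF 1] j(2)
      by (auto simp: off_gamma_iff)
  next
    case 2
    then show ?thesis using fix_pos_sigma by simp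
  next
    case 3
    then show ?thesis using psi_nth_exc[OF 3, of n] exc_rank_bounds[OF 3] j(2)
      by (auto simp: off_gamma_iff)
  qed
qed

lemma shuffles_psi_sigma_gamma:
  "shuffles (psi n \<sigma>) (gamma_word n \<sigma>) = partition (off_gamma n \<sigma>) -` {(psi n \<sigma>, gamma_word n \<sigma>)}"
  by (rule inv_image_partition[symmetric]) (auto dest: off_gamma_psi_sigma simp: off_gamma_def)

lemma last_psi_sigma: "last (psi n \<sigma>) = psi n \<sigma> ! (k - 1)"
  using k_pos length_sigma by (metis last_conv_nth length_psi list.size(3) not_one_le_zero)

end

text \<open>The absolute values of the moved letters of \<open>\<pi>\<close> are exactly the numbers \<open>i + 1\<close> for moved
  positions \<open>i\<close>, since the fixed points occupy the remaining values; so reduction is ranking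
  inside \<open>moved_vals\<close>.\<close>

locale delta_word = deranged_pattern +
  fixes \<pi> :: "int list"
  assumes signed_perm_pi: "signed_perm n \<pi>" and dp_pi: "dp \<pi> = \<sigma>"
begin

definition moved :: "nat list" where
  "moved = filter (\<lambda>i. \<pi>!i \<noteq> int (i+1)) [0..<n]"
definition fixed :: "nat list" where
  "fixed = filter (\<lambda>i. \<pi>!i = int (i+1)) [0..<n]"
definition moved_vals :: "int set" where
  "moved_vals = (\<lambda>i. int (i+1)) ` set moved"
definition red_rank :: "int \<Rightarrow> nat" where
  "red_rank y = card {a\<in>moved_vals. a \<le> y}"

lemma length_pi: "length \<pi> = n"
  using signed_perm_pi by (rule signed_perm_length)

lemma sigma_eq_red: "\<sigma> = red (map (nth \<pi>) moved)"
  using dp_pi unfolding dp_def nonfixed_subword_conv length_pi moved_def ..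

lemma length_moved: "length moved = k"
  using sigma_eq_red length_sigma by (metis length_map length_red)

lemma sorted_moved: "sorted_wrt (<) moved"
  unfolding moved_def by (rule sorted_wrt_less_filter_upt)

lemma set_moved: "set moved = {i. i < n \<and> \<pi>!i \<noteq> int (i+1)}"
  unfolding moved_def by auto

lemma set_moved_conv: "set moved = nth moved ` {..<k}"
  using length_moved by (auto simp: in_set_conv_nth)

lemma inj_on_moved: "inj_on (nth moved) {..<k}"
  using sorted_moved length_moved by (intro inj_on_nth) (auto simp: strict_sorted_iff)

lemma moved_nth: "j < k \<Longrightarrow> moved!j < n \<and> \<pi>!(moved!j) \<noteq> int (moved!j+1)"
  using nth_mem[of j moved] length_moved set_moved by auto

lemma moved_letter_nonzero: "j < k \<Longrightarrow> \<pi>!(moved!j) \<noteq> 0"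
  using signed_perm_nth_nonzero[OF signed_perm_pi] moved_nth length_pi by auto

lemma abs_moved_letters: "abs ` set (map (nth \<pi>) moved) = moved_vals"
proof (intro equalityI subsetI)
  fix y assume "y \<in> abs ` set (map (nth \<pi>) moved)"
  then obtain i where i: "i < n" "\<pi>!i \<noteq> int (i+1)" "y = \<bar>\<pi>!i\<bar>" using set_moved by auto
  then have "1 \<le> y" "y \<le> int n" using signed_perm_abs_bounds[OF signed_perm_pi, of i] length_pi by auto
  then obtain i' where i': "y = int (i'+1)" "i' < n"
    by (intro that[of "nat y - 1"]) auto
  have "\<pi>!i' \<noteq> int (i'+1)"
  proof
    assume h: "\<pi>!i' = int (i'+1)"
    then have "i' = i" using signed_perm_abs_inj[OF signed_perm_pi] i i' length_pi by auto
    then show False using h i by simp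
  qed
  then show "y \<in> moved_vals" unfolding moved_vals_def using i' set_moved by auto
next
  fix y assume "y \<in> moved_vals"
  then obtain i where i: "i < n" "\<pi>!i \<noteq> int (i+1)" "y = int (i+1)"
    unfolding moved_vals_def set_moved by auto
  obtain i' where i': "i' < n" "\<bar>\<pi>!i'\<bar> = y"
    using signed_perm_abs_surj[OF signed_perm_pi, of y] i length_pi by auto
  have "\<pi>!i' \<noteq> int (i'+1)"
  proof
    assume h: "\<pi>!i' = int (i'+1)"
    then have "i' = i" using i' i by simp
    then show False using h i by simp
  qed
  then show "y \<in> abs ` set (map (nth \<pi>) moved)" using i' set_moved by force
qed

lemma sigma_nth: "j < k \<Longrightarrow> \<sigma>!j = sgn (\<pi>!(moved!j)) * int (red_rank \<bar>\<pi>!(moved!j)\<bar>)"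
  using nth_red[of j "map (nth \<pi>) moved"] sigma_eq_red length_moved
  unfolding abs_moved_letters red_rank_def by simp

lemma abs_moved_letter_in_vals: "j < k \<Longrightarrow> \<bar>\<pi>!(moved!j)\<bar> \<in> moved_vals"
  using abs_moved_letters nth_mem[of j moved] length_moved by force

lemma moved_pos_in_vals: "j < k \<Longrightarrow> int (moved!j+1) \<in> moved_vals"
  unfolding moved_vals_def using length_moved by auto

lemma red_rank_less_iff: "b \<in> moved_vals \<Longrightarrow> red_rank a < red_rank b \<longleftrightarrow> a < b"
  unfolding red_rank_def using card_rank_less_iff[of moved_vals b "\<lambda>x. x" a]
  by (simp add: moved_vals_def)

lemma red_rank_moved_pos: "j < k \<Longrightarrow> red_rank (int (moved!j+1)) = Suc j"
proof -
  assume j: "j < k"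
  have "{a\<in>moved_vals. a \<le> int (moved!j+1)} = (\<lambda>i. int (i+1)) ` {x\<in>set moved. x \<le> moved!j}"
    unfolding moved_vals_def by auto
  moreover have "inj_on (\<lambda>i. int (i+1)) {x\<in>set moved. x \<le> moved!j}" by (auto simp: inj_on_def)
  ultimately have "red_rank (int (moved!j+1)) = card {x\<in>set moved. x \<le> moved!j}"
    unfolding red_rank_def by (simp add: card_image)
  then show ?thesis using sorted_wrt_less_card_le_nth[OF sorted_moved, of j] j length_moved by simp
qed

lemma sgn_sigma_nth: "j < k \<Longrightarrow> sgn (\<sigma>!j) = sgn (\<pi>!(moved!j))"
proof -
  assume j: "j < k"
  have "red_rank \<bar>\<pi>!(moved!j)\<bar> > 0"
    using card_rank_bounds(1)[of moved_vals _ "\<lambda>x. x"] abs_moved_letter_in_vals[OF j]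
    unfolding red_rank_def moved_vals_def by fastforce
  then show ?thesis unfolding sigma_nth[OF j] sgn_mult by simp
qed

lemma sigma_nth_neg: "j < k \<Longrightarrow> \<pi>!(moved!j) < 0 \<Longrightarrow> \<sigma>!j = - int (red_rank \<bar>\<pi>!(moved!j)\<bar>)"
  using sigma_nth by simp

lemma sigma_nth_pos: "j < k \<Longrightarrow> \<pi>!(moved!j) > 0 \<Longrightarrow> \<sigma>!j = int (red_rank (\<pi>!(moved!j)))"
  using sigma_nth by simp

lemma subc_pos_sigma_iff: "j < k \<Longrightarrow> j \<in> subc_pos \<sigma> \<longleftrightarrow> moved!j \<in> subc_pos \<pi>"
proof -
  assume j: "j < k"
  show ?thesis
  proof (cases "\<pi>!(moved!j) < 0")
    case True
    then show ?thesis using sigma_nth_neg[OF j True] j moved_nth length_sigma length_pi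
      by (auto simp: subc_pos_def)
  next
    case False
    then have pos: "\<pi>!(moved!j) > 0" using moved_letter_nonzero[OF j] by simp
    have "\<sigma>!j < int (j+1) \<longleftrightarrow> red_rank (\<pi>!(moved!j)) < red_rank (int (moved!j+1))"
      unfolding sigma_nth_pos[OF j pos] red_rank_moved_pos[OF j] by linarith
    also have "\<dots> \<longleftrightarrow> \<pi>!(moved!j) < int (moved!j+1)"
      using red_rank_less_iff[OF moved_pos_in_vals[OF j]] .
    finally show ?thesis using j moved_nth length_sigma length_pi by (auto simp: subc_pos_def)
  qed
qed

lemma exc_pos_sigma_iff: "j < k \<Longrightarrow> j \<in> exc_pos \<sigma> \<longleftrightarrow> moved!j \<in> exc_pos \<pi>"
proof -
  assume j: "j < k"
  show ?thesis
  proof (cases "\<pi>!(moved!j) < 0")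
    case True
    then show ?thesis using sigma_nth_neg[OF j True] j moved_nth length_sigma length_pi
      by (auto simp: exc_pos_def)
  next
    case False
    then have pos: "\<pi>!(moved!j) > 0" using moved_letter_nonzero[OF j] by simp
    have "\<sigma>!j > int (j+1) \<longleftrightarrow> red_rank (int (moved!j+1)) < red_rank (\<pi>!(moved!j))"
      unfolding sigma_nth_pos[OF j pos] red_rank_moved_pos[OF j] by linarith
    also have "\<dots> \<longleftrightarrow> int (moved!j+1) < \<pi>!(moved!j)"
      using red_rank_less_iff abs_moved_letter_in_vals[OF j] pos by simp
    finally show ?thesis using j moved_nth length_sigma length_pi by (auto simp: exc_pos_def)
  qed
qed

lemma subc_pos_pi: "subc_pos \<pi> = nth moved ` subc_pos \<sigma>"
proof (intro equalityI subsetI)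
  fix i assume i: "i \<in> subc_pos \<pi>"
  then have "i \<in> set moved" using set_moved by (auto simp: subc_pos_def length_pi)
  then obtain j where "j < k" "i = moved!j" unfolding set_moved_conv by auto
  then show "i \<in> nth moved ` subc_pos \<sigma>" using subc_pos_sigma_iff i by auto
next
  fix i assume "i \<in> nth moved ` subc_pos \<sigma>"
  then show "i \<in> subc_pos \<pi>" using subc_pos_sigma_iff pos_classes_sigma_less by auto
qed

lemma exc_pos_pi: "exc_pos \<pi> = nth moved ` exc_pos \<sigma>"
proof (intro equalityI subsetI)
  fix i assume i: "i \<in> exc_pos \<pi>"
  then have "i \<in> set moved" using set_moved by (auto simp: exc_pos_def length_pi)
  then obtain j where "j < k" "i = moved!j" unfolding set_moved_conv by auto
  then show "i \<in> nth moved ` exc_pos \<sigma>" using exc_pos_sigma_iff i by auto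
next
  fix i assume "i \<in> nth moved ` exc_pos \<sigma>"
  then show "i \<in> exc_pos \<pi>" using exc_pos_sigma_iff pos_classes_sigma_less by auto
qed

lemma inj_on_moved_subset: "A \<subseteq> {..<k} \<Longrightarrow> inj_on (nth moved) A"
  using inj_on_moved by (rule inj_on_subset)

lemma s_num_pi: "s_num \<pi> = s_num \<sigma>"
  unfolding s_num_def subc_pos_pi
  using pos_classes_sigma_less(1) by (intro card_image inj_on_moved_subset) blast

lemma e_num_pi: "e_num \<pi> = e_num \<sigma>"
  unfolding e_num_def exc_pos_pi
  using pos_classes_sigma_less(2) by (intro card_image inj_on_moved_subset) blast

lemma subc_rank_pi: "j \<in> subc_pos \<sigma> \<Longrightarrow> subc_rank \<pi> (moved!j) = subc_rank \<sigma> j"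
proof -
  assume j: "j \<in> subc_pos \<sigma>"
  have le_iff: "\<bar>\<sigma>!j'\<bar> \<le> \<bar>\<sigma>!j\<bar> \<longleftrightarrow> \<bar>\<pi>!(moved!j')\<bar> \<le> \<bar>\<pi>!(moved!j)\<bar>" if "j' < k" for j'
    using sigma_nth[OF that] sigma_nth[OF pos_classes_sigma_less(1)[OF j]] moved_letter_nonzero that
      red_rank_less_iff[OF abs_moved_letter_in_vals[OF that]] pos_classes_sigma_less(1)[OF j]
      moved_letter_nonzero[OF pos_classes_sigma_less(1)[OF j]]
    by (simp add: abs_mult not_less[symmetric])
  have "{j' \<in> subc_pos \<pi>. \<bar>\<pi>!j'\<bar> \<le> \<bar>\<pi>!(moved!j)\<bar>}
      = nth moved ` {j' \<in> subc_pos \<sigma>. \<bar>\<sigma>!j'\<bar> \<le> \<bar>\<sigma>!j\<bar>}"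
    unfolding subc_pos_pi using le_iff pos_classes_sigma_less(1) by auto
  then show ?thesis unfolding subc_rank_def
    using pos_classes_sigma_less(1) by (simp add: card_image inj_on_moved_subset subset_eq)
qed

lemma exc_rank_pi: "j \<in> exc_pos \<sigma> \<Longrightarrow> exc_rank \<pi> (moved!j) = exc_rank \<sigma> j"
proof -
  assume j: "j \<in> exc_pos \<sigma>"
  have pos: "\<pi>!(moved!j') > 0" if "j' \<in> exc_pos \<sigma>" for j'
    using exc_pos_sigma_iff[of j'] that pos_classes_sigma_less(2) by (auto simp: exc_pos_def)
  have in_vals: "\<pi>!(moved!j') \<in> moved_vals" if "j' \<in> exc_pos \<sigma>" for j'
    using abs_moved_letter_in_vals pos[OF that] pos_classes_sigma_less(2)[OF that] by force
  have le_iff: "\<sigma>!j' \<ge> \<sigma>!j \<longleftrightarrow> \<pi>!(moved!j') \<ge> \<pi>!(moved!j)" if "j' \<in> exc_pos \<sigma>" for j'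
    using sigma_nth_pos[OF _ pos] pos_classes_sigma_less(2) that j
      red_rank_less_iff[OF in_vals[OF j], of "\<pi>!(moved!j')"]
    by (simp add: not_less[symmetric])
  have "{j' \<in> exc_pos \<pi>. \<pi>!j' \<ge> \<pi>!(moved!j)} = nth moved ` {j' \<in> exc_pos \<sigma>. \<sigma>!j' \<ge> \<sigma>!j}"
    unfolding exc_pos_pi using le_iff by auto
  then show ?thesis unfolding exc_rank_def
    using pos_classes_sigma_less(2) by (simp add: card_image inj_on_moved_subset subset_eq)
qed

lemma psi_pi_moved: "j < k \<Longrightarrow> psi n \<pi> ! (moved!j) = psi n \<sigma> ! j"
proof -
  assume j: "j < k"
  show ?thesis
  proof (cases rule: pos_classes_cases[of j \<sigma>])
    show "j < length \<sigma>" using j length_sigma by simp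
  next
    assume "j \<in> subc_pos \<sigma>"
    then show ?thesis using psi_nth_subc subc_pos_sigma_iff[OF j] subc_rank_pi sgn_sigma_nth[OF j]
      by simp
  next
    assume "j \<in> fix_pos \<sigma>"
    then show ?thesis using fix_pos_sigma by simp
  next
    assume "j \<in> exc_pos \<sigma>"
    then show ?thesis using psi_nth_exc exc_pos_sigma_iff[OF j] exc_rank_pi by simp
  qed
qed

lemma pi_moved_nth: "j < k \<Longrightarrow> \<pi>!(moved!j) = sgn (\<sigma>!j) * int (moved ! (nat \<bar>\<sigma>!j\<bar> - 1) + 1)"
proof -
  assume j: "j < k"
  obtain m where m: "m < k" "\<bar>\<pi>!(moved!j)\<bar> = int (moved!m + 1)"
    using abs_moved_letter_in_vals[OF j] unfolding moved_vals_def set_moved_conv by auto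
  then have "\<bar>\<sigma>!j\<bar> = int (Suc m)"
    using sigma_nth[OF j] red_rank_moved_pos[OF m(1)] moved_letter_nonzero[OF j]
    by (simp add: abs_mult)
  then have "nat \<bar>\<sigma>!j\<bar> - 1 = m" by (simp only: nat_int diff_Suc_1)
  then have "int (moved ! (nat \<bar>\<sigma>!j\<bar> - 1) + 1) = \<bar>\<pi>!(moved!j)\<bar>" using m by simp
  then show ?thesis using sgn_sigma_nth[OF j] by (simp add: sgn_mult_abs)
qed

lemma set_fixed: "set fixed = fix_pos \<pi>"
  unfolding fixed_def fix_pos_def length_pi by auto

lemma length_fixed: "length fixed = n - k"
proof -
  have "length moved + length fixed = n" unfolding moved_def fixed_def
    using sum_length_filter_compl[of "\<lambda>i. \<pi>!i \<noteq> int (i+1)" "[0..<n]"] by simp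
  then show ?thesis using length_moved by simp
qed

lemma psi_pi_fixed: "m < n - k \<Longrightarrow> psi n \<pi> ! (fixed!m) = int (s_num \<sigma> + Suc m)"
proof -
  assume m: "m < n - k"
  have mem: "fixed!m \<in> fix_pos \<pi>" using set_fixed nth_mem[of m fixed] length_fixed m by auto
  have "{j' \<in> fix_pos \<pi>. \<pi>!j' \<le> \<pi>!(fixed!m)} = {x\<in>set fixed. x \<le> fixed!m}"
    using mem unfolding set_fixed by (auto simp: fix_pos_def)
  then have "fix_rank \<pi> (fixed!m) = Suc m" unfolding fix_rank_def
    using sorted_wrt_less_card_le_nth[of fixed m] sorted_wrt_less_filter_upt length_fixed m
    by (simp add: fixed_def)
  then show ?thesis using psi_nth_fix[OF mem] s_num_pi by simp
qed

lemma off_gamma_psi_pi_iff: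
  assumes i: "i < n"
  shows "off_gamma n \<sigma> (psi n \<pi> ! i) \<longleftrightarrow> \<pi>!i \<noteq> int (i+1)"
proof (cases "\<pi>!i = int (i+1)")
  case True
  then have A: "i \<in> fix_pos \<pi>" using i length_pi by (auto simp: fix_pos_def)
  have "s_num \<sigma> + card (fix_pos \<pi>) + e_num \<sigma> = n"
    using card_pos_classes[of \<pi>] length_pi s_num_pi e_num_pi by simp
  then show ?thesis using psi_nth_fix[OF A, of n] fix_rank_bounds[OF A] True s_num_pi
    by (simp add: off_gamma_iff)
next
  case False
  then have "i \<in> set moved" using i set_moved by simp
  then obtain j where "j < k" "i = moved!j" unfolding set_moved_conv by auto
  then have "psi n \<pi> ! i \<in> set (psi n \<sigma>)" using psi_pi_moved length_sigma by simp
  then show ?thesis using off_gamma_psi_sigma False by simp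
qed

lemma filter_off_gamma_psi_pi: "filter (off_gamma n \<sigma>) (psi n \<pi>) = psi n \<sigma>"
proof -
  have "filter (off_gamma n \<sigma>) (psi n \<pi>) = map (nth (psi n \<pi>)) moved"
    unfolding moved_def using length_pi off_gamma_psi_pi_iff
    by (subst map_nth[symmetric]) (auto simp: filter_map o_def intro!: arg_cong[where f="map _"] filter_cong)
  also have "\<dots> = map (\<lambda>j. psi n \<sigma> ! j) [0..<k]"
    using length_moved psi_pi_moved by (subst map_nth[of moved, symmetric]) simp
  also have "\<dots> = psi n \<sigma>" using map_nth[of "psi n \<sigma>"] length_sigma by simp
  finally show ?thesis .
qed

lemma filter_on_gamma_psi_pi: "filter (\<lambda>x. \<not> off_gamma n \<sigma> x) (psi n \<pi>) = gamma_word n \<sigma>"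
proof -
  have "filter (\<lambda>x. \<not> off_gamma n \<sigma> x) (psi n \<pi>) = map (nth (psi n \<pi>)) fixed"
    unfolding fixed_def using length_pi off_gamma_psi_pi_iff
    by (subst map_nth[symmetric]) (auto simp: filter_map o_def intro!: arg_cong[where f="map _"] filter_cong)
  also have "\<dots> = map (\<lambda>m. int (s_num \<sigma> + Suc m)) [0..<n-k]"
    using length_fixed psi_pi_fixed by (subst map_nth[of fixed, symmetric]) simp
  also have "\<dots> = gamma_word n \<sigma>"
    using length_gamma_word_sigma nth_gamma_word[of _ n \<sigma>] s_num_plus_e_num_sigma
    by (intro nth_equalityI) auto
  finally show ?thesis .
qed

lemma psi_pi_in_shuffles: "psi n \<pi> \<in> shuffles (psi n \<sigma>) (gamma_word n \<sigma>)"
  unfolding shuffles_psi_sigma_gamma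
  using filter_off_gamma_psi_pi filter_on_gamma_psi_pi by (simp add: o_def)

lemma last_psi_pi:
  assumes "last \<pi> < int n"
  shows "last (psi n \<pi>) = last (psi n \<sigma>)"
proof -
  have n: "0 < n" "\<pi> \<noteq> []" using k_pos k_le_n length_pi by auto
  then have moved_last: "\<pi>!(n-1) \<noteq> int (n - 1 + 1)" using assms length_pi by (simp add: last_conv_nth)
  have "[0..<n] = [0..<n-1] @ [n-1]" using n(1) by (metis Suc_diff_1 upt_Suc_append zero_le)
  then have "last moved = n - 1" unfolding moved_def using moved_last by simp
  then have "moved ! (k - 1) = n - 1"
    using length_moved k_pos by (metis last_conv_nth list.size(3) not_one_le_zero)
  moreover have "last (psi n \<pi>) = psi n \<pi> ! (n - 1)"
    using n length_pi by (metis last_conv_nth length_0_conv length_psi)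
  ultimately show ?thesis using psi_pi_moved[of "k - 1"] k_pos last_psi_sigma by simp
qed

end

subsection \<open>Recovering the signed permutation from a shuffle\<close>

locale delta_shuffle = deranged_pattern +
  fixes \<alpha> :: "int list"
  assumes shuffle_alpha: "\<alpha> \<in> shuffles (psi n \<sigma>) (gamma_word n \<sigma>)"
    and last_alpha: "last \<alpha> = last (psi n \<sigma>)"
begin

definition marked :: "nat list" where
  "marked = filter (\<lambda>i. off_gamma n \<sigma> (\<alpha>!i)) [0..<n]"
definition marked_rank :: "nat \<Rightarrow> nat" where
  "marked_rank i = card {i'. i' < i \<and> off_gamma n \<sigma> (\<alpha>!i')}"
definition sigma_idx :: "nat \<Rightarrow> nat" where
  "sigma_idx j = nat \<bar>\<sigma>!j\<bar> - 1"
definition preimage_idx :: "nat \<Rightarrow> nat" where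
  "preimage_idx i = (if off_gamma n \<sigma> (\<alpha>!i) then marked ! sigma_idx (marked_rank i) else i)"
definition preimage :: "int list" where
  "preimage = map (\<lambda>i. if off_gamma n \<sigma> (\<alpha>!i)
      then sgn (\<sigma>!(marked_rank i)) * int (marked ! sigma_idx (marked_rank i) + 1)
      else int (i+1)) [0..<n]"

lemma filter_alpha:
  "filter (off_gamma n \<sigma>) \<alpha> = psi n \<sigma>" "filter (\<lambda>x. \<not> off_gamma n \<sigma> x) \<alpha> = gamma_word n \<sigma>"
  using shuffle_alpha unfolding shuffles_psi_sigma_gamma by (auto simp: o_def)

lemma length_alpha: "length \<alpha> = n"
  using length_shuffles[OF shuffle_alpha] length_gamma_word_sigma length_sigma k_le_n by simp

lemma length_marked: "length marked = k"
proof -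
  have "filter (off_gamma n \<sigma>) \<alpha> = map (nth \<alpha>) marked"
    unfolding marked_def by (subst map_nth[symmetric]) (simp add: length_alpha filter_map o_def)
  then show ?thesis using filter_alpha(1) length_sigma by (metis length_map length_psi)
qed

lemma sorted_marked: "sorted_wrt (<) marked"
  unfolding marked_def by (rule sorted_wrt_less_filter_upt)

lemma marked_eq_map_nth: "marked = map (nth marked) [0..<k]"
  using length_marked map_nth[of marked] by simp

lemma distinct_marked: "distinct marked"
  using sorted_marked strict_sorted_iff by blast

lemma marked_nth: "j < k \<Longrightarrow> marked!j < n \<and> off_gamma n \<sigma> (\<alpha>!(marked!j))"
  using nth_mem[of j marked] length_marked unfolding marked_def by auto

lemma marked_rank_marked_nth: "j < k \<Longrightarrow> marked_rank (marked!j) = j"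
  unfolding marked_rank_def marked_def
  using card_filter_upt_nth length_marked unfolding marked_def by simp

lemma marked_rank_less: "i < n \<Longrightarrow> off_gamma n \<sigma> (\<alpha>!i) \<Longrightarrow> marked_rank i < k \<and> marked ! marked_rank i = i"
proof -
  assume i: "i < n" "off_gamma n \<sigma> (\<alpha>!i)"
  then have "i \<in> set marked" unfolding marked_def by simp
  then obtain j where "j < k" "marked!j = i" using length_marked by (auto simp: in_set_conv_nth)
  then show ?thesis using marked_rank_marked_nth by auto
qed

lemma abs_sigma_bounds: "j < k \<Longrightarrow> 1 \<le> \<bar>\<sigma>!j\<bar> \<and> \<bar>\<sigma>!j\<bar> \<le> int k"
  using signed_perm_abs_bounds[OF signed_perm_sigma, of j] length_sigma by simp

lemma sigma_idx_less: "j < k \<Longrightarrow> sigma_idx j < k"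
  unfolding sigma_idx_def using abs_sigma_bounds[of j] by auto

lemma abs_sigma_nth: "j < k \<Longrightarrow> \<bar>\<sigma>!j\<bar> = int (Suc (sigma_idx j))"
  unfolding sigma_idx_def using abs_sigma_bounds[of j] by auto

lemma inj_on_sigma_idx: "inj_on sigma_idx {..<k}"
proof (rule inj_onI)
  fix j j' assume "j \<in> {..<k}" "j' \<in> {..<k}" "sigma_idx j = sigma_idx j'"
  then show "j = j'"
    using abs_sigma_nth[of j] abs_sigma_nth[of j'] signed_perm_abs_inj[OF signed_perm_sigma, of j j']
      length_sigma by simp
qed

lemma sigma_idx_surj: "sigma_idx ` {..<k} = {..<k}"
  using inj_on_sigma_idx sigma_idx_less by (intro endo_inj_surj) auto

lemma sigma_nth_nonzero: "j < k \<Longrightarrow> \<sigma>!j \<noteq> 0"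
  using abs_sigma_bounds[of j] by auto

lemma length_preimage: "length preimage = n"
  unfolding preimage_def by simp

lemma preimage_nth: "i < n \<Longrightarrow> preimage ! i = (if off_gamma n \<sigma> (\<alpha>!i)
    then sgn (\<sigma>!(marked_rank i)) * int (marked ! sigma_idx (marked_rank i) + 1) else int (i+1))"
  unfolding preimage_def by simp

lemma abs_preimage_nth: "i < n \<Longrightarrow> \<bar>preimage ! i\<bar> = int (preimage_idx i + 1)"
  using preimage_nth[of i] marked_rank_less[of i] sigma_nth_nonzero
  unfolding preimage_idx_def by (auto simp: abs_mult abs_sgn_eq)

text \<open>A marked position \<open>p\<^sub>j\<close> could only be fixed if \<open>\<sigma>\<^sub>j = j\<close>; this is where \<open>\<sigma>\<close> being a
  derangement is needed.\<close>

lemma preimage_moved_iff: "i < n \<Longrightarrow> preimage ! i \<noteq> int (i+1) \<longleftrightarrow> off_gamma n \<sigma> (\<alpha>!i)"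
proof (cases "off_gamma n \<sigma> (\<alpha>!i)")
  case True
  assume i: "i < n"
  define j where "j = marked_rank i"
  have j: "j < k" "marked!j = i" using marked_rank_less[OF i True] j_def by auto
  have "preimage ! i \<noteq> int (i+1)"
  proof
    assume "preimage ! i = int (i+1)"
    then have eq: "sgn (\<sigma>!j) * int (marked ! sigma_idx j + 1) = int (marked!j + 1)"
      using preimage_nth[OF i] True j by (simp add: j_def)
    have pos: "\<sigma>!j > 0"
    proof (rule ccontr)
      assume "\<not> \<sigma>!j > 0"
      then have "\<sigma>!j < 0" using sigma_nth_nonzero[OF j(1)] by simp
      then show False using eq by simp
    qed
    then have "marked ! sigma_idx j = marked ! j" using eq by simp
    then have "sigma_idx j = j"
      using nth_eq_iff_index_eq[OF distinct_marked] sigma_idx_less[OF j(1)] j(1) length_marked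
      by simp
    then have "\<sigma>!j = int (j+1)" using abs_sigma_nth[OF j(1)] pos by simp
    then show False using derangement j(1) by (simp add: derangD_def)
  qed
  then show ?thesis using True by simp
qed (simp add: preimage_nth)

lemma preimage_idx_less: "i < n \<Longrightarrow> preimage_idx i < n"
  unfolding preimage_idx_def using marked_rank_less[of i] marked_nth sigma_idx_less by auto

lemma inj_on_preimage_idx: "inj_on preimage_idx {..<n}"
proof (rule inj_onI)
  fix i i' assume "i \<in> {..<n}" "i' \<in> {..<n}" and eq: "preimage_idx i = preimage_idx i'"
  then have i: "i < n" "i' < n" by auto
  have marked_idx: "off_gamma n \<sigma> (\<alpha>!preimage_idx i)" if "i < n" "off_gamma n \<sigma> (\<alpha>!i)" for i
    using that marked_nth sigma_idx_less marked_rank_less unfolding preimage_idx_def by auto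
  show "i = i'"
  proof (cases "off_gamma n \<sigma> (\<alpha>!i)"; cases "off_gamma n \<sigma> (\<alpha>!i')")
    assume A: "off_gamma n \<sigma> (\<alpha>!i)" and B: "off_gamma n \<sigma> (\<alpha>!i')"
    then have "marked ! sigma_idx (marked_rank i) = marked ! sigma_idx (marked_rank i')"
      using eq unfolding preimage_idx_def by simp
    then have "sigma_idx (marked_rank i) = sigma_idx (marked_rank i')"
      using nth_eq_iff_index_eq[OF distinct_marked] sigma_idx_less length_marked
        marked_rank_less[OF i(1) A] marked_rank_less[OF i(2) B]
      by simp
    then have "marked_rank i = marked_rank i'"
      using inj_on_sigma_idx marked_rank_less[OF i(1) A] marked_rank_less[OF i(2) B]
      by (simp add: inj_on_def)
    then show ?thesis using marked_rank_less[OF i(1) A] marked_rank_less[OF i(2) B] by metis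
  next
    assume A: "off_gamma n \<sigma> (\<alpha>!i)" and B: "\<not> off_gamma n \<sigma> (\<alpha>!i')"
    then show ?thesis using marked_idx[OF i(1) A] eq unfolding preimage_idx_def by simp
  next
    assume A: "\<not> off_gamma n \<sigma> (\<alpha>!i)" and B: "off_gamma n \<sigma> (\<alpha>!i')"
    then show ?thesis using marked_idx[OF i(2) B] eq unfolding preimage_idx_def by simp
  next
    assume "\<not> off_gamma n \<sigma> (\<alpha>!i)" "\<not> off_gamma n \<sigma> (\<alpha>!i')"
    then show ?thesis using eq unfolding preimage_idx_def by simp
  qed
qed

lemma signed_perm_preimage: "signed_perm n preimage"
proof -
  have abs_map: "map abs preimage = map (\<lambda>i. int (preimage_idx i + 1)) [0..<n]"
    by (rule nth_equalityI) (auto simp: length_preimage abs_preimage_nth)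
  have "inj_on (\<lambda>i. int (preimage_idx i + 1)) {..<n}"
    using inj_on_preimage_idx by (auto simp: inj_on_def)
  then have distinct: "distinct (map abs preimage)"
    unfolding abs_map by (simp add: distinct_map lessThan_atLeast0)
  have surj: "preimage_idx ` {..<n} = {..<n}"
    using inj_on_preimage_idx preimage_idx_less by (intro endo_inj_surj) auto
  have "set (map abs preimage) = (\<lambda>i. int (i + 1)) ` preimage_idx ` {..<n}"
    unfolding abs_map by (auto simp: lessThan_atLeast0)
  also have "\<dots> = {1..int n}"
    unfolding surj
  proof (intro equalityI subsetI)
    fix x assume "x \<in> {1..int n}"
    then have "x = int (nat x - 1 + 1)" "nat x - 1 < n" by auto
    then show "x \<in> (\<lambda>i. int (i + 1)) ` {..<n}" by blast
  qed auto
  finally have abs_set: "set (map abs preimage) = {1..int n}" .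
  have "preimage ! i \<noteq> 0" if "i < n" for i
    using abs_preimage_nth[OF that] by auto
  then have "0 \<notin> set preimage" using length_preimage by (auto simp: in_set_conv_nth)
  then show ?thesis unfolding signed_perm_def using distinct abs_set length_preimage by simp
qed


lemma moved_preimage: "filter (\<lambda>i. preimage!i \<noteq> int (i+1)) [0..<n] = marked"
  unfolding marked_def using preimage_moved_iff by (intro filter_cong) auto

lemma nonfixed_subword_preimage:
  "nonfixed_subword preimage = map (\<lambda>j. sgn (\<sigma>!j) * int (marked ! sigma_idx j + 1)) [0..<k]"
proof -
  have "nonfixed_subword preimage = map (nth preimage) marked"
    unfolding nonfixed_subword_conv length_preimage moved_preimage ..
  also have "\<dots> = map (\<lambda>j. preimage ! (marked!j)) [0..<k]"
    by (subst marked_eq_map_nth) simp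
  also have "\<dots> = map (\<lambda>j. sgn (\<sigma>!j) * int (marked ! sigma_idx j + 1)) [0..<k]"
    by (rule map_cong) (auto simp: preimage_nth marked_nth marked_rank_marked_nth)
  finally show ?thesis .
qed

lemma dp_preimage: "dp preimage = \<sigma>"
proof -
  let ?v = "map (\<lambda>j. sgn (\<sigma>!j) * int (marked ! sigma_idx j + 1)) [0..<k]"
  have abs_v: "abs ` set ?v = (\<lambda>m. int (marked ! m + 1)) ` {..<k}"
  proof -
    have "abs ` set ?v = (\<lambda>j. int (marked ! sigma_idx j + 1)) ` {..<k}"
      using sigma_nth_nonzero by (auto simp: abs_mult abs_sgn_eq image_image lessThan_atLeast0)
    also have "\<dots> = (\<lambda>m. int (marked ! m + 1)) ` sigma_idx ` {..<k}" by (simp add: image_image)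
    finally show ?thesis unfolding sigma_idx_surj .
  qed
  have "red ?v = \<sigma>"
  proof (rule nth_equalityI)
    show "length (red ?v) = length \<sigma>" using length_sigma by simp
  next
    fix j assume "j < length (red ?v)"
    then have j: "j < k" by simp
    have abs_vj: "\<bar>?v!j\<bar> = int (marked ! sigma_idx j + 1)"
      using j sigma_nth_nonzero[OF j] by (simp add: abs_mult abs_sgn_eq)
    have "{y \<in> abs ` set ?v. y \<le> \<bar>?v!j\<bar>} = (\<lambda>m. int (m + 1)) ` {x \<in> set marked. x \<le> marked ! sigma_idx j}"
      unfolding abs_v abs_vj using length_marked by (auto simp: in_set_conv_nth)
    then have "card {y \<in> abs ` set ?v. y \<le> \<bar>?v!j\<bar>} = Suc (sigma_idx j)"
      using sorted_wrt_less_card_le_nth[OF sorted_marked, of "sigma_idx j"] sigma_idx_less[OF j]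
        length_marked by (simp add: card_image inj_on_def)
    then have "red ?v ! j = sgn (\<sigma>!j) * \<bar>\<sigma>!j\<bar>"
      using j abs_sigma_nth[OF j] by (simp add: nth_red sgn_mult)
    then show "red ?v ! j = \<sigma>!j" by (simp add: sgn_mult_abs)
  qed
  then show ?thesis unfolding dp_def nonfixed_subword_preimage .
qed

lemma off_gamma_last_alpha: "off_gamma n \<sigma> (\<alpha>!(n-1))"
proof -
  have "\<alpha> \<noteq> []" using length_alpha k_pos k_le_n by auto
  moreover have "psi n \<sigma> \<noteq> []" using length_sigma k_pos by (metis length_psi list.size(3) not_one_le_zero)
  ultimately show ?thesis using last_alpha length_alpha off_gamma_psi_sigma last_in_set
    by (metis last_conv_nth)
qed

lemma marked_last: "marked ! (k-1) = n-1"
proof -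
  have "0 < n" using k_pos k_le_n by simp
  then have "[0..<n] = [0..<n-1] @ [n-1]" by (metis Suc_diff_1 upt_Suc_append zero_le)
  then have "last marked = n-1" unfolding marked_def using off_gamma_last_alpha by simp
  then show ?thesis using length_marked k_pos by (metis last_conv_nth list.size(3) not_one_le_zero)
qed

lemma last_preimage_bounds: "0 < last preimage \<and> last preimage < int n"
proof -
  have k: "k - 1 < k" and n: "n - 1 < n" using k_pos k_le_n by auto
  have "last \<sigma> = \<sigma>!(k-1)" using length_sigma k_pos by (metis last_conv_nth list.size(3) not_one_le_zero)
  then have pos: "\<sigma>!(k-1) > 0" using derangement by (simp add: derangD_def)
  have "last preimage = preimage ! (n-1)"
    using length_preimage n by (metis last_conv_nth list.size(3) not_less_zero)
  moreover have "preimage ! (n-1) = int (marked ! sigma_idx (k-1) + 1)"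
    using preimage_nth[OF n] off_gamma_last_alpha marked_rank_marked_nth[OF k] marked_last pos
    by simp
  moreover have "preimage ! (n-1) \<noteq> int n"
    using preimage_moved_iff[OF n] off_gamma_last_alpha n by simp
  moreover have "marked ! sigma_idx (k-1) < n" using marked_nth[OF sigma_idx_less[OF k]] by simp
  ultimately show ?thesis by auto
qed

lemma preimage_in_Delta_lt: "preimage \<in> Delta_lt n \<sigma>"
  unfolding Delta_lt_def B_def using signed_perm_preimage dp_preimage last_preimage_bounds by simp

lemma psi_preimage: "psi n preimage = \<alpha>"
proof -
  interpret delta_word n k \<sigma> preimage
    by unfold_locales (use signed_perm_preimage dp_preimage in auto)
  show ?thesis
  proof (rule list_eq_by_filter_partition[where P="off_gamma n \<sigma>"])
    show "length (psi n preimage) = length \<alpha>" using length_preimage length_alpha by simp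
    show "\<forall>i<length (psi n preimage). off_gamma n \<sigma> (psi n preimage ! i) \<longleftrightarrow> off_gamma n \<sigma> (\<alpha> ! i)"
      using off_gamma_psi_pi_iff preimage_moved_iff length_preimage by simp
    show "filter (off_gamma n \<sigma>) (psi n preimage) = filter (off_gamma n \<sigma>) \<alpha>"
      using filter_off_gamma_psi_pi filter_alpha by simp
    show "filter (\<lambda>x. \<not> off_gamma n \<sigma> x) (psi n preimage) = filter (\<lambda>x. \<not> off_gamma n \<sigma> x) \<alpha>"
      using filter_on_gamma_psi_pi filter_alpha by simp
  qed
qed

end

context deranged_pattern
begin

lemma delta_word_if_Delta_lt: "\<pi> \<in> Delta_lt n \<sigma> \<Longrightarrow> delta_word n k \<sigma> \<pi>"
  unfolding Delta_lt_def B_def by unfold_locales (auto intro: derangement k_pos k_le_n)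

lemma inj_on_psi_Delta_lt: "inj_on (psi n) (Delta_lt n \<sigma>)"
proof (rule inj_onI)
  fix \<pi>1 \<pi>2 assume p1: "\<pi>1 \<in> Delta_lt n \<sigma>" and p2: "\<pi>2 \<in> Delta_lt n \<sigma>"
    and eq: "psi n \<pi>1 = psi n \<pi>2"
  interpret w1: delta_word n k \<sigma> \<pi>1 using p1 by (rule delta_word_if_Delta_lt)
  interpret w2: delta_word n k \<sigma> \<pi>2 using p2 by (rule delta_word_if_Delta_lt)
  have moved_iff: "\<pi>1!i \<noteq> int (i+1) \<longleftrightarrow> \<pi>2!i \<noteq> int (i+1)" if "i < n" for i
    using w1.off_gamma_psi_pi_iff[OF that] w2.off_gamma_psi_pi_iff[OF that] eq by simp
  then have moved: "w1.moved = w2.moved"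
    unfolding w1.moved_def w2.moved_def by (intro filter_cong) auto
  show "\<pi>1 = \<pi>2"
  proof (rule nth_equalityI)
    show "length \<pi>1 = length \<pi>2" using w1.length_pi w2.length_pi by simp
  next
    fix i assume "i < length \<pi>1"
    then have i: "i < n" using w1.length_pi by simp
    show "\<pi>1!i = \<pi>2!i"
    proof (cases "\<pi>1!i = int (i+1)")
      case True
      then show ?thesis using moved_iff[OF i] by simp
    next
      case False
      then have "i \<in> set w1.moved" using w1.set_moved i by simp
      then obtain j where "j < k" "i = w1.moved!j" unfolding w1.set_moved_conv by auto
      then show ?thesis using w1.pi_moved_nth w2.pi_moved_nth moved by simp
    qed
  qed
qed

lemma psi_image_Delta_lt:
  "psi n ` Delta_lt n \<sigma> = {\<alpha>. \<alpha> \<in> shuffles (psi n \<sigma>) (gamma_word n \<sigma>) \<and> last \<alpha> = last (psi n \<sigma>)}"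
proof (intro equalityI subsetI)
  fix \<alpha> assume "\<alpha> \<in> psi n ` Delta_lt n \<sigma>"
  then obtain \<pi> where \<pi>: "\<pi> \<in> Delta_lt n \<sigma>" "\<alpha> = psi n \<pi>" by auto
  interpret delta_word n k \<sigma> \<pi> using \<pi>(1) by (rule delta_word_if_Delta_lt)
  show "\<alpha> \<in> {\<alpha>. \<alpha> \<in> shuffles (psi n \<sigma>) (gamma_word n \<sigma>) \<and> last \<alpha> = last (psi n \<sigma>)}"
    using \<pi> psi_pi_in_shuffles last_psi_pi by (simp add: Delta_lt_def)
next
  fix \<alpha> assume "\<alpha> \<in> {\<alpha>. \<alpha> \<in> shuffles (psi n \<sigma>) (gamma_word n \<sigma>) \<and> last \<alpha> = last (psi n \<sigma>)}"
  then interpret delta_shuffle n k \<sigma> \<alpha> by unfold_locales auto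
  show "\<alpha> \<in> psi n ` Delta_lt n \<sigma>" using preimage_in_Delta_lt psi_preimage by force
qed

end

theorem lemma5p6:
  fixes n k :: nat and \<sigma> :: "int list"
  assumes "1 \<le> k" "k \<le> n" "\<sigma> \<in> derangD k"
  shows "bij_betw (psi n) (Delta_lt n \<sigma>)
           {\<alpha>. \<alpha> \<in> shuffles (psi n \<sigma>) (gamma_word n \<sigma>) \<and> last \<alpha> = last (psi n \<sigma>)}
         \<and> (\<forall>\<pi> \<in> Delta_lt n \<sigma>. fmaj \<pi> = fmaj (psi n \<pi>))"
proof -
  interpret deranged_pattern n k \<sigma> using assms by unfold_locales
  show ?thesis
    using inj_on_psi_Delta_lt psi_image_Delta_lt fmaj_psi
    by (auto simp: bij_betw_def Delta_lt_def B_def)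
qed

end
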